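(* For all integers $m\ge1$ and $n,h,r\ge0$, $$\mathcal D_{m,r}(n+h,u)=\sum_{k=0}^n\sum_{j=0}^h\binom nk\,\mathcal D_{m,r}(k,u)\,W_{m,r}(h,j)\,u^j\,j^{\,n-k}m^{\,n-k},$$ with the convention $0^0=1$.
   Context: For integers $m\ge1$, $n,k,r\ge0$, $W_{m,r}(n,k)$ denotes the $r$-Whitney number of the second kind, defined by $\sum_{n\ge k}W_{m,r}(n,k)\frac{z^n}{n!}=\frac{e^{rz}}{k!}\left(\frac{e^{mz}-1}{m}\right)^k$ (and $W_{m,r}(n,k)=0$ if $k<0$ or $k>n$). The $r$-Dowling polynomial is $\mathcal D_{m,r}(n,u):=\sum_{k=0}^nW_{m,r}(n,k)u^k$. *)

theory Defs
  imports "HOL-Computational_Algebra.Formal_Power_Series"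
begin

text \<open>r-Whitney numbers of the second kind, defined via their exponential generating
  function: sum over n of W m r n k z^n/n! = e^(rz)/k! ((e^(mz)-1)/m)^k.
  For k > n the coefficient vanishes automatically.\<close>
definition whitney2 :: "nat \<Rightarrow> nat \<Rightarrow> nat \<Rightarrow> nat \<Rightarrow> real" where
  "whitney2 m r n k =
     fact n * fps_nth (fps_exp (real r) * fps_const (1 / fact k) *
        ((fps_exp (real m) - 1) * fps_const (1 / real m)) ^ k) n"

definition dowling :: "nat \<Rightarrow> nat \<Rightarrow> nat \<Rightarrow> real \<Rightarrow> real" where
  "dowling m r n u = (\<Sum>k=0..n. whitney2 m r n k * u ^ k)"

end

theory Submission
  imports Defs
begin

text \<open>The exponential generating function of the Dowling polynomials is
  F(z) = e^(rz) exp(u (e^(mz) - 1)/m). By the triangular recurrence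
  W(h+1,j) = (r + mj) W(h,j) + W(h,j-1) and induction on h, the h-th derivative of F is
  F \<cdot> P_h with P_h(z) = \<Sum>_j W(h,j) u^j e^(jmz). The n-th coefficient of this derivative
  is D(n+h)/n!, and expanding the Cauchy product of F and P_h gives the right-hand side.\<close>

unbundle fps_syntax

lemma fps_power_nth_below:
  fixes f :: "'a::idom fps"
  assumes "f $ 0 = 0" and "n < k"
  shows "(f ^ k) $ n = 0"
proof (cases "f = 0")
  case True
  with assms(2) show ?thesis by (cases k) auto
next
  case False
  with assms(1) have "1 \<le> subdegree f"
    by (simp add: Suc_le_eq subdegree_eq_0_iff flip: neq0_conv)
  with assms(2) have "n < k * subdegree f"
    by (metis less_le_trans mult.right_neutral mult_le_mono2)
  then show ?thesis by (rule fps_pow_nth_below_subdegree)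
qed

lemma fact_mult_funpow_fps_deriv_nth:
  fixes f :: "'a::{comm_semiring_1, semiring_char_0} fps"
  shows "fact n * (fps_deriv ^^ h) f $ n = fact (n + h) * f $ (n + h)"
proof (induction h arbitrary: f)
  case (Suc h)
  have "fact n * (fps_deriv ^^ Suc h) f $ n = fact (n + h) * fps_deriv f $ (n + h)"
    by (simp only: funpow_Suc_right o_apply Suc)
  also have "\<dots> = fact (n + Suc h) * f $ (n + Suc h)"
    by (simp add: algebra_simps)
  finally show ?case .
qed simp

definition whitney_base :: "nat \<Rightarrow> real fps" where
  "whitney_base m = (fps_exp (real m) - 1) * fps_const (1 / real m)"

definition whitney_egf :: "nat \<Rightarrow> nat \<Rightarrow> nat \<Rightarrow> real fps" where
  "whitney_egf m r k = fps_exp (real r) * fps_const (1 / fact k) * whitney_base m ^ k"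

lemma whitney2_eq_egf_nth: "whitney2 m r n k = fact n * whitney_egf m r k $ n"
  unfolding whitney2_def whitney_egf_def whitney_base_def by simp

lemma whitney_base_nth_0 [simp]: "whitney_base m $ 0 = 0"
  by (simp add: whitney_base_def)

lemma whitney_egf_nth_below: "n < k \<Longrightarrow> whitney_egf m r k $ n = 0"
  unfolding whitney_egf_def fps_mult_nth[of _ "whitney_base m ^ k"]
  by (auto intro!: sum.neutral fps_power_nth_below)

lemma whitney2_eq_0: "n < k \<Longrightarrow> whitney2 m r n k = 0"
  by (simp add: whitney2_eq_egf_nth whitney_egf_nth_below)

lemma fps_deriv_whitney_base: "m \<ge> 1 \<Longrightarrow> fps_deriv (whitney_base m) = fps_exp (real m)"
  by (simp add: whitney_base_def)

lemma fps_exp_eq_whitney_base: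
  assumes "m \<ge> 1"
  shows "fps_exp (real m) = fps_const (real m) * whitney_base m + 1"
proof -
  have "fps_const (real m) * whitney_base m
      = (fps_exp (real m) - 1) * (fps_const (real m) * fps_const (1 / real m))"
    by (simp add: whitney_base_def mult_ac)
  also have "\<dots> = fps_exp (real m) - 1"
    using assms by simp
  finally show ?thesis by simp
qed

lemma fps_deriv_whitney_egf_0:
  "fps_deriv (whitney_egf m r 0) = fps_const (real r) * whitney_egf m r 0"
  by (simp add: whitney_egf_def)

lemma fps_deriv_whitney_egf_Suc:
  assumes "m \<ge> 1"
  shows "fps_deriv (whitney_egf m r (Suc j))
    = fps_const (real r + real m * real (Suc j)) * whitney_egf m r (Suc j) + whitney_egf m r j"
proof -
  define E Y where "E = fps_exp (real r)" and "Y = whitney_base m"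
  have egf: "whitney_egf m r k = fps_const (1 / fact k) * (E * Y ^ k)" for k
    by (simp add: whitney_egf_def E_def Y_def mult_ac)
  have "fps_deriv (Y ^ Suc j) = fps_const (real (Suc j)) * (fps_const (real m) * Y + 1) * Y ^ j"
    using assms unfolding fps_deriv_power
    by (simp add: Y_def fps_deriv_whitney_base fps_exp_eq_whitney_base)
  then have "fps_deriv (whitney_egf m r (Suc j))
      = fps_const (1 / fact (Suc j)) * (fps_const (real r) * E * Y ^ Suc j
        + E * (fps_const (real (Suc j)) * (fps_const (real m) * Y + 1) * Y ^ j))"
    unfolding egf fps_deriv_mult_const_left fps_deriv_mult by (simp add: E_def)
  also have "\<dots> = fps_const (real r + real m * real (Suc j)) * whitney_egf m r (Suc j)
      + fps_const (real (Suc j) / fact (Suc j)) * (E * Y ^ j)"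
    unfolding egf by (simp add: algebra_simps del: fact_Suc of_nat_Suc flip: fps_const_add)
  also have "real (Suc j) / fact (Suc j) = 1 / fact j"
    by simp
  finally show ?thesis
    by (simp only: egf)
qed

lemma whitney2_Suc_0: "whitney2 m r (Suc n) 0 = real r * whitney2 m r n 0"
proof -
  have "whitney2 m r (Suc n) 0 = fact n * fps_deriv (whitney_egf m r 0) $ n"
    by (simp add: whitney2_eq_egf_nth algebra_simps)
  then show ?thesis
    by (simp add: fps_deriv_whitney_egf_0 whitney2_eq_egf_nth algebra_simps)
qed

lemma whitney2_Suc_Suc:
  assumes "m \<ge> 1"
  shows "whitney2 m r (Suc n) (Suc j)
    = (real r + real m * real (Suc j)) * whitney2 m r n (Suc j) + whitney2 m r n j"
proof -
  have "whitney2 m r (Suc n) (Suc j) = fact n * fps_deriv (whitney_egf m r (Suc j)) $ n"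
    by (simp add: whitney2_eq_egf_nth algebra_simps)
  then show ?thesis
    by (simp add: fps_deriv_whitney_egf_Suc[OF assms] whitney2_eq_egf_nth algebra_simps)
qed

definition dowling_egf :: "nat \<Rightarrow> nat \<Rightarrow> real \<Rightarrow> real fps" where
  "dowling_egf m r u = fps_exp (real r) * (fps_exp u oo whitney_base m)"

lemma fps_exp_compose_whitney_base_nth:
  assumes "t \<le> n"
  shows "(fps_exp u oo whitney_base m) $ t = (\<Sum>k=0..n. u ^ k / fact k * (whitney_base m ^ k) $ t)"
proof -
  have "(fps_exp u oo whitney_base m) $ t = (\<Sum>k=0..t. u ^ k / fact k * (whitney_base m ^ k) $ t)"
    by (simp add: fps_compose_nth)
  also have "\<dots> = (\<Sum>k=0..n. u ^ k / fact k * (whitney_base m ^ k) $ t)"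
    using assms by (intro sum.mono_neutral_left) (auto simp: fps_power_nth_below)
  finally show ?thesis .
qed

lemma dowling_egf_nth: "dowling_egf m r u $ n = (\<Sum>k=0..n. u ^ k * whitney_egf m r k $ n)"
proof -
  have "dowling_egf m r u $ n = (\<Sum>i=0..n. real r ^ i / fact i
      * (\<Sum>k=0..n. u ^ k / fact k * (whitney_base m ^ k) $ (n - i)))"
    unfolding dowling_egf_def fps_mult_nth
    by (intro sum.cong refl) (simp add: fps_exp_compose_whitney_base_nth[of _ n])
  also have "\<dots> = (\<Sum>k=0..n. u ^ k * (\<Sum>i=0..n. real r ^ i / fact i * (1 / fact k)
      * (whitney_base m ^ k) $ (n - i)))"
    unfolding sum_distrib_left by (subst sum.swap) (simp add: mult_ac)
  also have "\<dots> = (\<Sum>k=0..n. u ^ k * whitney_egf m r k $ n)"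
    by (simp add: whitney_egf_def fps_mult_nth[of _ "whitney_base m ^ _"])
  finally show ?thesis .
qed

lemma dowling_eq_egf_nth: "dowling m r n u = fact n * dowling_egf m r u $ n"
  by (simp add: dowling_def dowling_egf_nth whitney2_eq_egf_nth sum_distrib_left mult_ac)

lemma fps_deriv_dowling_egf:
  assumes "m \<ge> 1"
  shows "fps_deriv (dowling_egf m r u)
    = (fps_const (real r) + fps_const u * fps_exp (real m)) * dowling_egf m r u"
proof -
  have "fps_deriv (fps_exp u oo whitney_base m)
      = fps_const u * (fps_exp u oo whitney_base m) * fps_exp (real m)"
    using assms
    by (simp add: fps_compose_deriv fps_deriv_whitney_base fps_const_mult_apply_left)
  then show ?thesis
    by (simp add: dowling_egf_def algebra_simps)
qed

definition dowling_deriv_factor :: "nat \<Rightarrow> nat \<Rightarrow> real \<Rightarrow> nat \<Rightarrow> real fps" where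
  "dowling_deriv_factor m r u h =
     (\<Sum>j=0..h. fps_const (whitney2 m r h j * u ^ j) * fps_exp (real j * real m))"

lemma dowling_deriv_factor_0 [simp]: "dowling_deriv_factor m r u 0 = 1"
  by (simp add: dowling_deriv_factor_def whitney2_eq_egf_nth whitney_egf_def)

lemma dowling_deriv_factor_Suc:
  assumes "m \<ge> 1"
  shows "dowling_deriv_factor m r u (Suc h)
    = (fps_const (real r) + fps_const u * fps_exp (real m)) * dowling_deriv_factor m r u h
      + fps_deriv (dowling_deriv_factor m r u h)"
proof -
  define T where "T h j = fps_const (whitney2 m r h j * u ^ j) * fps_exp (real j * real m)" for h j
  define P where "P = dowling_deriv_factor m r u h"
  have P_eq: "dowling_deriv_factor m r u k = (\<Sum>j=0..k. T k j)" for k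
    by (simp add: dowling_deriv_factor_def T_def)
  have T_deriv: "fps_deriv (T h j) = fps_const (real j * real m) * T h j" for j
    by (simp add: T_def mult_ac)
  have T_Suc_0: "T (Suc h) 0 = fps_const (real r) * T h 0"
    by (simp add: T_def whitney2_Suc_0)
  have T_Suc_Suc: "T (Suc h) (Suc j) = fps_const (real r + real (Suc j) * real m) * T h (Suc j)
      + fps_const u * fps_exp (real m) * T h j" for j
  proof -
    have "fps_exp (real (Suc j) * real m) = fps_exp (real m) * fps_exp (real j * real m)"
      by (simp add: distrib_right flip: fps_exp_add_mult)
    then show ?thesis
      unfolding T_def whitney2_Suc_Suc[OF assms] by (simp add: algebra_simps flip: fps_const_add)
  qed
  have T_top: "T h (Suc h) = 0"
    by (simp add: T_def whitney2_eq_0)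
  have "dowling_deriv_factor m r u (Suc h) = T (Suc h) 0 + (\<Sum>j=0..h. T (Suc h) (Suc j))"
    unfolding P_eq sum.atLeast0_atMost_Suc_shift by (simp add: comp_def)
  also have "\<dots> = fps_const (real r) * T h 0
      + (\<Sum>j=0..h. fps_const (real r + real (Suc j) * real m) * T h (Suc j))
      + fps_const u * fps_exp (real m) * P"
    by (simp add: T_Suc_0 T_Suc_Suc P_eq P_def sum.distrib sum_distrib_left add_ac)
  also have "\<dots> = (\<Sum>j=0..Suc h. fps_const (real r + real j * real m) * T h j)
      + fps_const u * fps_exp (real m) * P"
    by (simp only: sum.atLeast0_atMost_Suc_shift) simp
  also have "\<dots> = (\<Sum>j=0..h. fps_const (real r) * T h j + fps_deriv (T h j))
      + fps_const u * fps_exp (real m) * P"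
    by (simp add: T_top T_deriv algebra_simps flip: fps_const_add)
  also have "\<dots> = (fps_const (real r) + fps_const u * fps_exp (real m)) * P + fps_deriv P"
    by (simp add: P_def P_eq sum.distrib sum_distrib_left fps_deriv_sum algebra_simps)
  finally show ?thesis
    by (simp only: P_def)
qed

lemma funpow_fps_deriv_dowling_egf:
  assumes "m \<ge> 1"
  shows "(fps_deriv ^^ h) (dowling_egf m r u) = dowling_egf m r u * dowling_deriv_factor m r u h"
proof (induction h)
  case (Suc h)
  then show ?case
    using assms by (simp add: dowling_deriv_factor_Suc fps_deriv_dowling_egf algebra_simps)
qed simp

lemma dowling_deriv_factor_nth:
  "dowling_deriv_factor m r u h $ t
    = (\<Sum>j=0..h. whitney2 m r h j * u ^ j * (real j * real m) ^ t / fact t)"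
  by (simp add: dowling_deriv_factor_def fps_sum_nth)

theorem mainTheorem5:
  fixes m n h r :: nat and u :: real
  assumes "m \<ge> 1"
  shows "dowling m r (n + h) u =
    (\<Sum>k=0..n. \<Sum>j=0..h. real (n choose k) * dowling m r k u * whitney2 m r h j
        * u ^ j * real j ^ (n - k) * real m ^ (n - k))"
proof -
  have "dowling m r (n + h) u = fact n * ((fps_deriv ^^ h) (dowling_egf m r u)) $ n"
    by (simp add: dowling_eq_egf_nth fact_mult_funpow_fps_deriv_nth)
  also have "\<dots> = (\<Sum>k=0..n. fact n * dowling_egf m r u $ k * dowling_deriv_factor m r u h $ (n - k))"
    by (simp add: funpow_fps_deriv_dowling_egf[OF assms] fps_mult_nth sum_distrib_left mult_ac)
  also have "\<dots> = (\<Sum>k=0..n. \<Sum>j=0..h. real (n choose k) * dowling m r k u * whitney2 m r h j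
        * u ^ j * real j ^ (n - k) * real m ^ (n - k))"
  proof (intro sum.cong refl)
    fix k assume "k \<in> {0..n}"
    then have "fact n = real (n choose k) * fact k * fact (n - k)"
      by (simp add: binomial_fact)
    then show "fact n * dowling_egf m r u $ k * dowling_deriv_factor m r u h $ (n - k)
        = (\<Sum>j=0..h. real (n choose k) * dowling m r k u * whitney2 m r h j
            * u ^ j * real j ^ (n - k) * real m ^ (n - k))"
      by (simp add: dowling_deriv_factor_nth dowling_eq_egf_nth sum_distrib_left
          power_mult_distrib field_simps)
  qed
  finally show ?thesis .
qed

end
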